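(* There is a formula $\phi_{\in}(X_l,X_r,Z)$ in the signature of $\mathcal{W}(I)$ such that for every $i\in I$ and every $A\in\mathcal{P}_{\mathrm{fci}}(I)$, $$i\in A \iff \mathcal{W}(I)\models\phi_{\in}(l(A),r(A),\{i\}).$$
   Context: Let $I$ be a dense linear order with left endpoint $0$ and no right endpoint. Let $\mathcal{P}_{\mathrm{fci}}(I)$ be the set of finite unions of closed intervals $[i,j]$, $[i,+\infty)$, $(-\infty,j]$ of $I$. For $A\in\mathcal{P}_{\mathrm{fci}}(I)$, $l(A)$ and $r(A)$ are the finite sets of left and right endpoints of $A$. Left endpoints are the minima of the maximal closed intervals composing $A$, and right endpoints are the maxima of the bounded ones. $\mathcal{W}(I)$ has universe the finite subsets of $I$ and signature $\{\cup,\cap,\bot,c_0,\min,\max,\mathrm{ips}\}$, interpreted as follows. - $\cup$ and $\cap$ are union and intersection. - $\bot$ is $\emptyset$, and $c_0$ is $\{0\}$. - $\min$ and $\max$ send a nonempty set to the singleton of its minimum, respectively maximum, and fix $\emptyset$. - $\mathrm{ips}(A,B)=\{i\in A: s_A(i)\in B\}$, where $s_A$ is the successor function of $A$. *)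

theory Defs
  imports Main
begin

definition closed_ival :: "'a::linorder set \<Rightarrow> bool" where
  "closed_ival C \<longleftrightarrow>
     (\<exists>i j. i \<le> j \<and> C = {i..j}) \<or> (\<exists>i. C = {i..}) \<or> (\<exists>j. C = {..j})"

definition fci :: "'a::linorder set \<Rightarrow> bool" where
  "fci A \<longleftrightarrow> (\<exists>S. finite S \<and> (\<forall>C\<in>S. closed_ival C) \<and> A = \<Union>S)"

definition max_ival :: "'a::linorder set \<Rightarrow> 'a set \<Rightarrow> bool" where
  "max_ival A C \<longleftrightarrow> closed_ival C \<and> C \<subseteq> A \<and>
     (\<forall>D. closed_ival D \<and> C \<subseteq> D \<and> D \<subseteq> A \<longrightarrow> D = C)"

definition lend :: "'a::linorder set \<Rightarrow> 'a set" where
  "lend A = {x. \<exists>C. max_ival A C \<and> x \<in> C \<and> (\<forall>y\<in>C. x \<le> y)}"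

definition rend :: "'a::linorder set \<Rightarrow> 'a set" where
  "rend A = {x. \<exists>C. max_ival A C \<and> x \<in> C \<and> (\<forall>y\<in>C. y \<le> x)}"

definition wmin :: "'a::linorder set \<Rightarrow> 'a set" where
  "wmin S = (if S = {} then {} else {Min S})"

definition wmax :: "'a::linorder set \<Rightarrow> 'a set" where
  "wmax S = (if S = {} then {} else {Max S})"

definition succ_in :: "'a::linorder set \<Rightarrow> 'a \<Rightarrow> 'a \<Rightarrow> bool" where
  "succ_in A i j \<longleftrightarrow> j \<in> A \<and> i < j \<and> (\<forall>k\<in>A. i < k \<longrightarrow> j \<le> k)"

definition ips :: "'a::linorder set \<Rightarrow> 'a set \<Rightarrow> 'a set" where
  "ips A B = {i \<in> A. \<exists>j. succ_in A i j \<and> j \<in> B}"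

text \<open>First-order syntax over the signature {union, inter, bot, c0, min, max, ips}
  (equality is the only relation symbol); variables are natural numbers.\<close>
datatype wtrm = WVar nat | WUn wtrm wtrm | WInt wtrm wtrm | WBot | WC0
  | WMin wtrm | WMax wtrm | WIps wtrm wtrm

datatype wfml = WEq wtrm wtrm | WNeg wfml | WConj wfml wfml | WEx nat wfml

fun tvars :: "wtrm \<Rightarrow> nat set" where
  "tvars (WVar n) = {n}"
| "tvars (WUn s t) = tvars s \<union> tvars t"
| "tvars (WInt s t) = tvars s \<union> tvars t"
| "tvars WBot = {}"
| "tvars WC0 = {}"
| "tvars (WMin t) = tvars t"
| "tvars (WMax t) = tvars t"
| "tvars (WIps s t) = tvars s \<union> tvars t"

fun fvars :: "wfml \<Rightarrow> nat set" where
  "fvars (WEq s t) = tvars s \<union> tvars t"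
| "fvars (WNeg f) = fvars f"
| "fvars (WConj f g) = fvars f \<union> fvars g"
| "fvars (WEx n f) = fvars f - {n}"

text \<open>z is the left endpoint 0 of I\<close>
fun teval :: "'a::linorder \<Rightarrow> (nat \<Rightarrow> 'a set) \<Rightarrow> wtrm \<Rightarrow> 'a set" where
  "teval z e (WVar n) = e n"
| "teval z e (WUn s t) = teval z e s \<union> teval z e t"
| "teval z e (WInt s t) = teval z e s \<inter> teval z e t"
| "teval z e WBot = {}"
| "teval z e WC0 = {z}"
| "teval z e (WMin t) = wmin (teval z e t)"
| "teval z e (WMax t) = wmax (teval z e t)"
| "teval z e (WIps s t) = ips (teval z e s) (teval z e t)"

fun wsat :: "'a::linorder \<Rightarrow> (nat \<Rightarrow> 'a set) \<Rightarrow> wfml \<Rightarrow> bool" where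
  "wsat z e (WEq s t) = (teval z e s = teval z e t)"
| "wsat z e (WNeg f) = (\<not> wsat z e f)"
| "wsat z e (WConj f g) = (wsat z e f \<and> wsat z e g)"
| "wsat z e (WEx n f) = (\<exists>X. finite X \<and> wsat z (e(n := X)) f)"

end

theory Submission
  imports Defs
begin

text \<open>A point i lies in A iff some left endpoint l \<le> i of A is not followed by a right
  endpoint r with l \<le> r < i: then the maximal interval starting at l reaches i, and
  conversely the least element of the maximal interval through i is such an l.  This
  condition is first order in W(I), since points are the singletons, the minimum of
  {x, y} decides x \<le> y, and intersection decides membership.
  The real work is that every point of A lies in a maximal closed interval.  This rests on
  connectedness: in a dense order a closed interval is not covered by two disjoint finite
  unions of closed intervals that both meet it, because the last point of the first union
  before a point of the second would be followed by a gap in the second.\<close>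

lemma closed_ival_cases:
  fixes C :: "'a::linorder set"
  assumes "closed_ival C"
  obtains (bounded) i j where "i \<le> j" "C = {i..j}"
    | (atLeast) i where "C = {i..}"
    | (atMost) j where "C = {..j}"
  using assms unfolding closed_ival_def by metis

lemma closed_ival_convex:
  assumes "closed_ival C" "x \<in> C" "y \<in> C" "x \<le> w" "w \<le> y"
  shows "w \<in> C"
  using assms unfolding closed_ival_def by force

lemma closed_ival_iff_bounded_below:
  fixes z :: "'a::linorder" and C :: "'a set"
  assumes bottom: "\<forall>x. z \<le> x"
  shows "closed_ival C \<longleftrightarrow> (\<exists>a b. a \<le> b \<and> C = {a..b}) \<or> (\<exists>a. C = {a..})"
proof
  assume "closed_ival C"
  then show "(\<exists>a b. a \<le> b \<and> C = {a..b}) \<or> (\<exists>a. C = {a..})"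
  proof (cases rule: closed_ival_cases)
    case (atMost j)
    then have "C = {z..j}" "z \<le> j" using bottom by auto
    then show ?thesis by metis
  qed metis+
qed (unfold closed_ival_def, metis)

lemma closed_ival_has_least:
  fixes z :: "'a::linorder" and C :: "'a set"
  assumes bottom: "\<forall>x. z \<le> x" and "closed_ival C"
  shows "\<exists>l\<in>C. \<forall>y\<in>C. l \<le> y"
  using assms(2) unfolding closed_ival_iff_bounded_below[OF bottom] by auto

lemma closed_ival_Un:
  fixes z :: "'a::linorder" and C D :: "'a set"
  assumes bottom: "\<forall>x. z \<le> x"
    and "closed_ival C" "closed_ival D" "C \<inter> D \<noteq> {}"
  shows "closed_ival (C \<union> D)"
proof -
  note closed = closed_ival_iff_bounded_below[OF bottom]
  from assms(2,3) consider
      a b c d where "C = {a..b}" "D = {c..d}" "a \<le> b" "c \<le> d"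
    | a b c where "C = {a..b}" "D = {c..}"
    | a c d where "C = {a..}" "D = {c..d}"
    | a c where "C = {a..}" "D = {c..}"
    unfolding closed by metis
  then show ?thesis
  proof cases
    case 1
    then have "C \<union> D = {min a c..max b d}" using assms(4) by (auto simp: min_def max_def)
    then show ?thesis unfolding closed using 1 by (metis le_max_iff_disj min.coboundedI1)
  next
    case 2
    then have "C \<union> D = {min a c..}" using assms(4) by (auto simp: min_def)
    then show ?thesis unfolding closed by metis
  next
    case 3
    then have "C \<union> D = {min a c..}" using assms(4) by (auto simp: min_def)
    then show ?thesis unfolding closed by metis
  next
    case 4
    then have "C \<union> D = {min a c..}" by (auto simp: min_def)
    then show ?thesis unfolding closed by metis
  qed
qed

lemma closed_ival_avoids_right_nbhd:
  fixes E :: "'a::linorder set"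
  assumes "closed_ival E" "b \<notin> E" "b < c"
  shows "\<exists>y>b. {b<..<y} \<inter> E = {}"
  using assms(1)
proof (cases rule: closed_ival_cases)
  case (bounded i j)
  show ?thesis
  proof (cases "b < i")
    case True
    then have "{b<..<i} \<inter> E = {}" using bounded by auto
    with True show ?thesis by blast
  next
    case False
    then have "j < b" using assms(2) bounded by auto
    then have "{b<..<c} \<inter> E = {}" using bounded by auto
    with assms(3) show ?thesis by blast
  qed
next
  case (atLeast i)
  then have "b < i" "{b<..<i} \<inter> E = {}" using assms(2) by auto
  then show ?thesis by blast
next
  case (atMost j)
  then have "{b<..<c} \<inter> E = {}" using assms(2) by auto
  with assms(3) show ?thesis by blast
qed

lemma Union_closed_ival_avoids_right_nbhd:
  fixes F :: "'a::linorder set set"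
  assumes "finite F" "\<forall>E\<in>F. closed_ival E" "b \<notin> \<Union>F" "b < c"
  shows "\<exists>y>b. {b<..<y} \<inter> \<Union>F = {}"
  using assms
proof (induction F rule: finite_induct)
  case empty
  then show ?case by auto
next
  case (insert E F)
  obtain y where y: "b < y" "{b<..<y} \<inter> \<Union>F = {}"
    using insert.IH insert.prems by auto
  obtain y' where y': "b < y'" "{b<..<y'} \<inter> E = {}"
    using closed_ival_avoids_right_nbhd[of E b c] insert.prems by auto
  have "{b<..<min y y'} \<inter> \<Union>(insert E F) = {}" using y(2) y'(2) by auto
  then show ?case using y(1) y'(1) by (metis min_less_iff_conj)
qed

lemma Union_closed_ival_no_gap_after:
  fixes F :: "'a::linorder set set"
  assumes dense: "\<forall>x y::'a. x < y \<longrightarrow> (\<exists>w. x < w \<and> w < y)"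
    and "finite F" "\<forall>E\<in>F. closed_ival E" "b \<notin> \<Union>F" "b < c"
  shows "\<not> {b<..c} \<subseteq> \<Union>F"
proof
  assume covered: "{b<..c} \<subseteq> \<Union>F"
  obtain y where y: "b < y" "{b<..<y} \<inter> \<Union>F = {}"
    using Union_closed_ival_avoids_right_nbhd[OF assms(2-5)] by blast
  have "b < min y c" using y(1) \<open>b < c\<close> by simp
  then obtain w where "b < w" "w < min y c" using dense by blast
  then have "w \<in> {b<..c}" "w \<in> {b<..<y}" by auto
  then show False using covered y(2) by blast
qed

lemma closed_ival_Int_atMost_has_greatest:
  fixes E :: "'a::linorder set"
  assumes "closed_ival E" "E \<inter> {..q} \<noteq> {}"
  shows "\<exists>g\<in>E \<inter> {..q}. \<forall>y\<in>E \<inter> {..q}. y \<le> g"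
  using assms(1)
proof (cases rule: closed_ival_cases)
  case (bounded i j)
  then have "min j q \<in> E \<inter> {..q}" using assms(2) by auto
  then show ?thesis using bounded by (intro bexI[of _ "min j q"]) auto
next
  case (atLeast i)
  then have "q \<in> E \<inter> {..q}" using assms(2) by auto
  then show ?thesis by blast
next
  case (atMost j)
  then have "min j q \<in> E \<inter> {..q}" by auto
  then show ?thesis using atMost by (intro bexI[of _ "min j q"]) auto
qed

lemma Union_closed_ival_Int_atMost_has_greatest:
  fixes F :: "'a::linorder set set"
  assumes "finite F" "\<forall>E\<in>F. closed_ival E" "\<Union>F \<inter> {..q} \<noteq> {}"
  shows "\<exists>g\<in>\<Union>F \<inter> {..q}. \<forall>y\<in>\<Union>F \<inter> {..q}. y \<le> g"
  using assms
proof (induction F rule: finite_induct)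
  case empty
  then show ?case by simp
next
  case (insert E F)
  have split: "\<Union>(insert E F) \<inter> {..q} = (E \<inter> {..q}) \<union> (\<Union>F \<inter> {..q})" by auto
  show ?case
  proof (cases "E \<inter> {..q} = {}")
    case True
    then show ?thesis using insert unfolding split by simp
  next
    case False
    then obtain g where g: "g \<in> E \<inter> {..q}" "\<forall>y\<in>E \<inter> {..q}. y \<le> g"
      using closed_ival_Int_atMost_has_greatest insert.prems by blast
    show ?thesis
    proof (cases "\<Union>F \<inter> {..q} = {}")
      case True
      then show ?thesis using g unfolding split by blast
    next
      case False
      then obtain g' where "g' \<in> \<Union>F \<inter> {..q}" "\<forall>y\<in>\<Union>F \<inter> {..q}. y \<le> g'"
        using insert.IH insert.prems by auto
      then show ?thesis using g unfolding split
        by (metis Un_iff max.coboundedI1 max.coboundedI2 max_def)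
    qed
  qed
qed

lemma closed_ival_not_split:
  fixes D :: "'a::linorder set"
  assumes dense: "\<forall>x y::'a. x < y \<longrightarrow> (\<exists>w. x < w \<and> w < y)"
    and P: "finite P" "\<forall>E\<in>P. closed_ival E" and Q: "finite Q" "\<forall>E\<in>Q. closed_ival E"
    and D: "closed_ival D" "D \<subseteq> \<Union>P \<union> \<Union>Q"
    and disjoint: "\<Union>P \<inter> \<Union>Q = {}"
    and p: "p \<in> D \<inter> \<Union>P" and q: "q \<in> D \<inter> \<Union>Q" and "p < q"
  shows False
proof -
  obtain b where b: "b \<in> \<Union>P \<inter> {..q}" and greatest: "\<forall>y\<in>\<Union>P \<inter> {..q}. y \<le> b"
    using Union_closed_ival_Int_atMost_has_greatest[OF P, of q] p \<open>p < q\<close> by fastforce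
  have "p \<le> b" using greatest p \<open>p < q\<close> by auto
  have "b \<noteq> q" using b q disjoint by blast
  then have "b < q" using b by auto
  have "{b<..q} \<subseteq> \<Union>Q"
  proof
    fix y assume y: "y \<in> {b<..q}"
    then have "y \<in> D" using closed_ival_convex[OF D(1), of p q y] p q \<open>p \<le> b\<close> by auto
    moreover have "y \<notin> \<Union>P"
    proof
      assume "y \<in> \<Union>P"
      then have "y \<le> b" using greatest y by simp
      then show False using y by (simp add: not_le[symmetric])
    qed
    ultimately show "y \<in> \<Union>Q" using D(2) by blast
  qed
  moreover have "b \<notin> \<Union>Q" using b disjoint by blast
  ultimately show False using Union_closed_ival_no_gap_after[OF dense Q] \<open>b < q\<close> by blast
qed

lemma closed_ival_connected:
  fixes D :: "'a::linorder set"
  assumes dense: "\<forall>x y::'a. x < y \<longrightarrow> (\<exists>w. x < w \<and> w < y)"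
    and P: "finite P" "\<forall>E\<in>P. closed_ival E" and Q: "finite Q" "\<forall>E\<in>Q. closed_ival E"
    and D: "closed_ival D" "D \<subseteq> \<Union>P \<union> \<Union>Q"
    and disjoint: "\<Union>P \<inter> \<Union>Q = {}"
    and "D \<inter> \<Union>P \<noteq> {}"
  shows "D \<subseteq> \<Union>P"
proof
  fix q assume "q \<in> D"
  obtain p where p: "p \<in> D \<inter> \<Union>P" using \<open>D \<inter> \<Union>P \<noteq> {}\<close> by blast
  show "q \<in> \<Union>P"
  proof (rule ccontr)
    assume "q \<notin> \<Union>P"
    then have q: "q \<in> D \<inter> \<Union>Q" using \<open>q \<in> D\<close> D(2) by blast
    have "p \<noteq> q" using p q disjoint by blast
    then consider "p < q" | "q < p" by fastforce
    then show False
    proof cases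
      case 1
      show False using closed_ival_not_split[OF dense P Q D disjoint p q 1] .
    next
      case 2
      have "D \<subseteq> \<Union>Q \<union> \<Union>P" "\<Union>Q \<inter> \<Union>P = {}" using D(2) disjoint by blast+
      then show False using closed_ival_not_split[OF dense Q P D(1) _ _ q p 2] by blast
    qed
  qed
qed

lemma max_ival_eq_if_meet:
  fixes z :: "'a::linorder" and C D :: "'a set"
  assumes bottom: "\<forall>x. z \<le> x"
    and "max_ival A C" "max_ival A D" "C \<inter> D \<noteq> {}"
  shows "C = D"
proof -
  have "closed_ival (C \<union> D)" "C \<union> D \<subseteq> A"
    using closed_ival_Un[OF bottom] assms(2-4) unfolding max_ival_def by blast+
  then have "C \<union> D = C" "C \<union> D = D"
    using assms(2,3) unfolding max_ival_def by (meson sup.cobounded1 sup.cobounded2)+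
  then show ?thesis by blast
qed

lemma exists_max_ival:
  fixes z :: "'a::linorder" and A :: "'a set"
  assumes bottom: "\<forall>x. z \<le> x"
    and dense: "\<forall>x y::'a. x < y \<longrightarrow> (\<exists>w. x < w \<and> w < y)"
    and "fci A" "i \<in> A"
  shows "\<exists>C. max_ival A C \<and> i \<in> C"
proof -
  obtain S where S: "finite S" "\<forall>E\<in>S. closed_ival E" and A: "A = \<Union>S"
    using assms(3) unfolding fci_def by blast
  define F where "F = {S'. S' \<subseteq> S \<and> i \<in> \<Union>S' \<and> closed_ival (\<Union>S')}"
  obtain E where "E \<in> S" "i \<in> E" using assms(4) A by blast
  then have "{E} \<in> F" unfolding F_def using S(2) by auto
  moreover have "finite F" unfolding F_def using S(1) by auto
  ultimately obtain S' where "S' \<in> F" and maximal: "\<forall>T\<in>F. S' \<subseteq> T \<longrightarrow> S' = T"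
    using finite_has_maximal by blast
  define C where "C = \<Union>S'"
  \<comment> \<open>Members of S outside S' miss C, so connectedness leaves no room to enlarge C.\<close>
  have S': "S' \<subseteq> S" "i \<in> C" "closed_ival C" using \<open>S' \<in> F\<close> unfolding F_def C_def by auto
  have absorbed: "E \<in> S'" if "E \<in> S" "E \<inter> C \<noteq> {}" for E
  proof -
    have "closed_ival (E \<union> C)" using closed_ival_Un[OF bottom] S(2) S'(3) that by blast
    then have "insert E S' \<in> F" using S' that(1) unfolding F_def C_def by auto
    then show "E \<in> S'" using maximal by blast
  qed
  have disjoint: "\<Union>S' \<inter> \<Union>(S - S') = {}" using absorbed unfolding C_def by blast
  have "C \<subseteq> A" using S'(1) A C_def by blast
  have "D = C" if "closed_ival D" "C \<subseteq> D" "D \<subseteq> A" for D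
  proof -
    have "D \<subseteq> \<Union>S' \<union> \<Union>(S - S')" using that(3) A by blast
    moreover have "D \<inter> \<Union>S' \<noteq> {}" using that(2) S'(2) C_def by blast
    ultimately have "D \<subseteq> C" unfolding C_def
      using closed_ival_connected[OF dense _ _ _ _ that(1) _ disjoint] S S'(1)
      by (meson Diff_subset finite_Diff finite_subset subsetD)
    then show "D = C" using that(2) by blast
  qed
  then have "max_ival A C" unfolding max_ival_def using S'(3) \<open>C \<subseteq> A\<close> by blast
  then show ?thesis using S'(2) by blast
qed

lemma fci_mem_iff:
  fixes z :: "'a::linorder" and A :: "'a set"
  assumes bottom: "\<forall>x. z \<le> x"
    and dense: "\<forall>x y::'a. x < y \<longrightarrow> (\<exists>w. x < w \<and> w < y)"
    and "fci A"
  shows "i \<in> A \<longleftrightarrow> (\<exists>l\<in>lend A. l \<le> i \<and> rend A \<inter> {l..<i} = {})"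
proof
  assume "i \<in> A"
  then obtain C where C: "max_ival A C" "i \<in> C" using exists_max_ival[OF bottom dense assms(3)] by blast
  have "closed_ival C" using C unfolding max_ival_def by blast
  then obtain l where l: "l \<in> C" "\<forall>y\<in>C. l \<le> y" using closed_ival_has_least[OF bottom] by blast
  have "r \<notin> {l..<i}" if r: "r \<in> rend A" for r
  proof
    assume lr: "r \<in> {l..<i}"
    obtain D where D: "max_ival A D" "r \<in> D" "\<forall>y\<in>D. y \<le> r" using r unfolding rend_def by blast
    have "r \<in> C" using closed_ival_convex[OF \<open>closed_ival C\<close> l(1) C(2)] lr by auto
    then have "C = D" using max_ival_eq_if_meet[OF bottom C(1) D(1)] D(2) by blast
    then show False using D(3) C(2) lr by auto
  qed
  moreover have "l \<in> lend A" unfolding lend_def using C l by blast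
  ultimately show "\<exists>l\<in>lend A. l \<le> i \<and> rend A \<inter> {l..<i} = {}" using l C(2) by blast
next
  assume "\<exists>l\<in>lend A. l \<le> i \<and> rend A \<inter> {l..<i} = {}"
  then obtain l where l: "l \<in> lend A" "l \<le> i" "rend A \<inter> {l..<i} = {}" by blast
  obtain C where C: "max_ival A C" "l \<in> C" "\<forall>y\<in>C. l \<le> y" using l(1) unfolding lend_def by blast
  have "closed_ival C" "C \<subseteq> A" using C(1) unfolding max_ival_def by blast+
  then consider a b where "a \<le> b" "C = {a..b}" | a where "C = {a..}"
    unfolding closed_ival_iff_bounded_below[OF bottom] by blast
  then show "i \<in> A"
  proof cases
    case (1 a b)
    have "b \<in> rend A" unfolding rend_def using C(1) 1 by auto
    then have "\<not> b < i" using l(3) C(2) 1 by auto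
    then have "i \<in> C" using 1 C(2) l(2) by auto
    then show ?thesis using \<open>C \<subseteq> A\<close> by blast
  next
    case (2 a)
    then show ?thesis using \<open>C \<subseteq> A\<close> C(2) l(2) by auto
  qed
qed

definition wsingleton :: "wtrm \<Rightarrow> wfml" where
  "wsingleton t = WConj (WEq (WMin t) t) (WNeg (WEq t WBot))"

definition wex_point :: "nat \<Rightarrow> wfml \<Rightarrow> wfml" where
  "wex_point n f = WEx n (WConj (wsingleton (WVar n)) f)"

definition wle :: "wtrm \<Rightarrow> wtrm \<Rightarrow> wfml" where
  "wle s t = WEq (WMin (WUn s t)) s"

definition wsubset :: "wtrm \<Rightarrow> wtrm \<Rightarrow> wfml" where
  "wsubset s t = WEq (WInt s t) s"

lemma wmin_eq_self_iff: "wmin X = X \<and> X \<noteq> {} \<longleftrightarrow> (\<exists>x. X = {x})"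
  unfolding wmin_def by (metis Min_singleton insert_not_empty)

lemma wsat_wsingleton: "wsat z e (wsingleton t) \<longleftrightarrow> (\<exists>x. teval z e t = {x})"
  unfolding wsingleton_def by (simp add: wmin_eq_self_iff)

lemma wsat_wex_point: "wsat z e (wex_point n f) \<longleftrightarrow> (\<exists>x. wsat z (e(n := {x})) f)"
  unfolding wex_point_def by (auto simp: wsat_wsingleton)

lemma wsat_wle_singletons:
  assumes "teval z e s = {x}" "teval z e t = {y}"
  shows "wsat z e (wle s t) \<longleftrightarrow> x \<le> y"
  using assms unfolding wle_def by (auto simp: wmin_def min_def)

lemma wsat_wsubset: "wsat z e (wsubset s t) \<longleftrightarrow> teval z e s \<subseteq> teval z e t"
  unfolding wsubset_def by auto

text \<open>Variables 0, 1, 2 hold l(A), r(A) and {i}; variable 3 ranges over left endpoints l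
  and variable 4 over right endpoints r.\<close>
definition phi_in :: wfml where
  "phi_in = wex_point 3 (WConj (wsubset (WVar 3) (WVar 0)) (WConj (wle (WVar 3) (WVar 2))
     (WNeg (wex_point 4 (WConj (wsubset (WVar 4) (WVar 1)) (WConj (wle (WVar 3) (WVar 4))
       (WConj (wle (WVar 4) (WVar 2)) (WNeg (WEq (WVar 4) (WVar 2))))))))))"

lemma fvars_phi_in: "fvars phi_in \<subseteq> {0, 1, 2}"
  unfolding phi_in_def wex_point_def wsingleton_def wle_def wsubset_def by auto

lemma wsat_phi_in:
  "wsat z ((\<lambda>_. {})(0 := L, 1 := R, 2 := {i})) phi_in \<longleftrightarrow>
     (\<exists>l\<in>L. l \<le> i \<and> R \<inter> {l..<i} = {})"
  unfolding phi_in_def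
  by (auto simp: wsat_wex_point wsat_wsubset wsat_wle_singletons disjoint_iff less_le)

theorem lemma6p2:
  fixes z :: "'a::linorder"
  assumes dense: "\<forall>x y::'a. x < y \<longrightarrow> (\<exists>w. x < w \<and> w < y)"
    and left_endpoint: "\<forall>x. z \<le> x"
    and no_right_endpoint: "\<forall>x::'a. \<exists>y. x < y"
  shows "\<exists>\<phi>. fvars \<phi> \<subseteq> {0, 1, 2} \<and>
           (\<forall>(i::'a) A. fci A \<longrightarrow>
              (i \<in> A \<longleftrightarrow>
               wsat z ((\<lambda>_. {})(0 := lend A, 1 := rend A, 2 := {i})) \<phi>))"
proof (intro exI conjI allI impI)
  show "fvars phi_in \<subseteq> {0, 1, 2}" by (rule fvars_phi_in)
  fix i :: 'a and A :: "'a set"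
  assume "fci A"
  then show "i \<in> A \<longleftrightarrow> wsat z ((\<lambda>_. {})(0 := lend A, 1 := rend A, 2 := {i})) phi_in"
    unfolding wsat_phi_in by (rule fci_mem_iff[OF left_endpoint dense])
qed

end
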